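(* (1) For $n\ge1$, the primary theta-seed $\Delta_1(\boldsymbol{\theta}_n)$ lies in $T_n$. (2) For $n\ge 3$, the secondary theta-seed $\Delta_2(\boldsymbol{\theta}_n)$ lies in $T_n$.
   Context: Let $\mathbb{Q}[\boldsymbol{\theta}_n,\boldsymbol{\xi}_n,\boldsymbol{\rho}_n]$ be the $\mathbb{Q}$-algebra generated by $3n$ pairwise anticommuting variables $\theta_i,\xi_i,\rho_i$ ($1\le i\le n$), with $\mathfrak{S}_n$ acting by permuting indices simultaneously in all three sets. For any of these variables $\alpha_j$, the derivative is defined on monomials by $\partial_{\alpha_j}(\alpha_{i_1}\cdots\alpha_{i_k}) = (-1)^{\ell-1}\alpha_{i_1}\cdots\widehat{\alpha_{i_\ell}}\cdots\alpha_{i_k}$ if the variable $\alpha_j$ equals the $\ell$-th factor, and $0$ if it does not occur, extended linearly. The space of triagonal fermionic harmonics is $T_n:=\{f : \sum_{i=1}^n\partial_{\theta_i}^h\partial_{\xi_i}^k\partial_{\rho_i}^\ell f=0 \text{ for all } h,k,\ell\ge0,\ h+k+\ell>0\}$. Define $\Delta_1(\boldsymbol{\theta}_n):=\sum_{\sigma\in\mathfrak{S}_n}\mathrm{sgn}(\sigma)\sigma(\theta_1\theta_2\cdots\theta_{n-1})$ and, for $n\ge3$, $\Delta_2(\boldsymbol{\theta}_n):=\sum_{\sigma\in\mathfrak{S}_n}\mathrm{sgn}(\sigma)\sigma\bigl((\theta_1\xi_2\rho_2+\theta_2\xi_1\rho_2+\theta_2\xi_2\rho_1)\theta_3\theta_4\cdots\theta_{n-1}\bigr)$,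 where empty products of $\theta$'s are $1$. *)

theory Defs
  imports Complex_Main "HOL-Combinatorics.Permutations" "HOL-Library.Product_Lexorder"
begin

text \<open>Exterior (Grassmann) algebra over the rationals on generators of type nat \<times> nat.
  An element is represented by its coefficient function: f S is the coefficient of the
  monomial given by the product of the generators in the finite set S, taken in
  increasing (lexicographic) order.\<close>

type_synonym gen = "nat \<times> nat"
type_synonym ext = "gen set \<Rightarrow> rat"

definition th :: "nat \<Rightarrow> gen" where "th i = (0, i)"
definition xi :: "nat \<Rightarrow> gen" where "xi i = (1, i)"
definition rh :: "nat \<Rightarrow> gen" where "rh i = (2, i)"

definition gens :: "nat \<Rightarrow> gen set" where
  "gens n = {th i | i. i \<in> {1..n}} \<union> {xi i | i. i \<in> {1..n}} \<union> {rh i | i. i \<in> {1..n}}"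

definition ezero :: ext where "ezero = (\<lambda>S. 0)"
definition eone :: ext where "eone = (\<lambda>S. if S = {} then 1 else 0)"
definition evar :: "gen \<Rightarrow> ext" where "evar a = (\<lambda>S. if S = {a} then 1 else 0)"
definition eadd :: "ext \<Rightarrow> ext \<Rightarrow> ext" where "eadd f g = (\<lambda>S. f S + g S)"
definition esmult :: "rat \<Rightarrow> ext \<Rightarrow> ext" where "esmult c f = (\<lambda>S. c * f S)"
definition esum :: "('a \<Rightarrow> ext) \<Rightarrow> 'a set \<Rightarrow> ext" where
  "esum F A = (\<lambda>S. \<Sum>x\<in>A. F x S)"

text \<open>Sign of merging the sorted monomials A and B: (-1)^(number of inversions).\<close>
definition msign :: "gen set \<Rightarrow> gen set \<Rightarrow> rat" where
  "msign A B = (-1) ^ card {(a, b). a \<in> A \<and> b \<in> B \<and> b < a}"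

definition emul :: "ext \<Rightarrow> ext \<Rightarrow> ext" where
  "emul f g = (\<lambda>S. \<Sum>A\<in>Pow S. msign A (S - A) * f A * g (S - A))"

definition eprod :: "ext list \<Rightarrow> ext" where
  "eprod xs = foldr emul xs eone"

text \<open>Derivative: on the sorted monomial of S \<union> {a} (a \<notin> S), a sits at position
  l = 1 + #{s \<in> S. s < a}, and the derivative yields sign (-1)^(l-1).\<close>
definition ederiv :: "gen \<Rightarrow> ext \<Rightarrow> ext" where
  "ederiv a f = (\<lambda>T. if a \<in> T then 0 else (-1) ^ card {t \<in> T. t < a} * f (insert a T))"

definition in_alg :: "nat \<Rightarrow> ext \<Rightarrow> bool" where
  "in_alg n f \<longleftrightarrow> (\<forall>S. f S \<noteq> 0 \<longrightarrow> S \<subseteq> gens n)"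

definition triag_harm :: "nat \<Rightarrow> ext set" where
  "triag_harm n = {f. in_alg n f \<and>
     (\<forall>h k l. h + k + l > 0 \<longrightarrow>
        esum (\<lambda>i. (ederiv (th i) ^^ h) ((ederiv (xi i) ^^ k) ((ederiv (rh i) ^^ l) f))) {1..n}
        = ezero)}"

definition Delta1 :: "nat \<Rightarrow> ext" where
  "Delta1 n = esum (\<lambda>\<sigma>. esmult (of_int (sign \<sigma>))
       (eprod (map (\<lambda>i. evar (th (\<sigma> i))) [1..<n])))
     {\<sigma>. \<sigma> permutes {1..n}}"

definition Delta2 :: "nat \<Rightarrow> ext" where
  "Delta2 n = esum (\<lambda>\<sigma>. esmult (of_int (sign \<sigma>))
       (emul
         (eadd (eadd (eprod [evar (th (\<sigma> 1)), evar (xi (\<sigma> 2)), evar (rh (\<sigma> 2))])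
                     (eprod [evar (th (\<sigma> 2)), evar (xi (\<sigma> 1)), evar (rh (\<sigma> 2))]))
                     (eprod [evar (th (\<sigma> 2)), evar (xi (\<sigma> 2)), evar (rh (\<sigma> 1))]))
         (eprod (map (\<lambda>i. evar (th (\<sigma> i))) [3..<n]))))
     {\<sigma>. \<sigma> permutes {1..n}}"

end

theory Submission
  imports Defs
begin

(* Both seeds are antisymmetrizations sum_sigma sgn(sigma) sigma(m) of monomials m: a single one
   for Delta_1, three for Delta_2. Since every derivative squares to zero, only the exponents
   h, k, l <= 1 matter, and the operator sum_i d_theta_i^h d_xi_i^k d_rho_i^l commutes with the
   action of S_n; so it maps the antisymmetrization of a word to the sum over j of the
   antisymmetrizations of the words derived at index j. Such an alternant vanishes as soon as two
   indices of {1..n} are missing from the word, because their transposition fixes the word and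
   reverses the sign. For Delta_1 every derived word misses both j and n. For Delta_2 this still
   holds for j >= 3, while for j in {1, 2} the derived words either carry only one of the
   indices 1, 2 or cancel in pairs under the transposition (1 2). *)

section \<open>Multiplication by a generator\<close>

lemma emul_eq_0_if_infinite: "infinite S \<Longrightarrow> emul f g S = 0"
  by (simp add: emul_def)

lemma msign_singleton: "msign {a} (S - {a}) = (-1) ^ card {s\<in>S. s < a}"
proof -
  have "{(x, b). x \<in> {a} \<and> b \<in> S - {a} \<and> b < x} = Pair a ` {s\<in>S. s < a}" by auto
  then show ?thesis by (simp add: msign_def card_image inj_on_def)
qed

lemma emul_evar:
  assumes "finite S"
  shows "emul (evar a) f S = (if a \<in> S then (-1) ^ card {s\<in>S. s < a} * f (S - {a}) else 0)"
proof -
  have "emul (evar a) f S = (\<Sum>A\<in>Pow S. if A = {a} then msign {a} (S - {a}) * f (S - {a}) else 0)"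
    unfolding emul_def evar_def by (rule sum.cong) auto
  also have "\<dots> = (if a \<in> S then msign {a} (S - {a}) * f (S - {a}) else 0)"
    using assms by (simp add: sum.delta')
  finally show ?thesis by (simp add: msign_singleton)
qed

lemma eone_emul:
  assumes "\<And>S. infinite S \<Longrightarrow> g S = 0"
  shows "emul eone g = g"
proof
  fix S
  show "emul eone g S = g S"
  proof (cases "finite S")
    case True
    have "emul eone g S = (\<Sum>A\<in>Pow S. if A = {} then msign {} S * g S else 0)"
      unfolding emul_def eone_def by (rule sum.cong) auto
    with True show ?thesis by (simp add: msign_def)
  qed (simp add: emul_eq_0_if_infinite assms)
qed

lemma emul_eadd_left: "emul (eadd f g) h = eadd (emul f h) (emul g h)"
  by (simp add: emul_def eadd_def sum.distrib ring_distribs fun_eq_iff)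

lemma card_less_insert:
  assumes "finite T" "a \<notin> T"
  shows "card {s\<in>insert a T. s < b} = card {s\<in>T. s < b} + (if a < b then 1 else 0)"
proof -
  have "{s\<in>insert a T. s < b} = (if a < b then insert a {s\<in>T. s < b} else {s\<in>T. s < b})"
    by auto
  with assms show ?thesis by simp
qed

lemma msign_insert:
  assumes "finite B" "finite C" "a \<notin> B"
  shows "msign (insert a B) C = (-1) ^ card {y\<in>C. y < a} * msign B C"
proof -
  let ?inv = "\<lambda>B. {(x, y). x \<in> B \<and> y \<in> C \<and> y < x}"
  have split: "?inv (insert a B) = Pair a ` {y\<in>C. y < a} \<union> ?inv B" by auto
  have "finite (?inv B)"
    by (rule finite_subset[of _ "B \<times> C"]) (use assms in auto)
  moreover have "Pair a ` {y\<in>C. y < a} \<inter> ?inv B = {}" using assms(3) by auto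
  ultimately have "card (?inv (insert a B)) = card {y\<in>C. y < a} + card (?inv B)"
    unfolding split using assms(2) by (simp add: card_Un_disjoint card_image inj_on_def)
  then show ?thesis by (simp add: msign_def power_add)
qed

lemma msign_insert_mult_sign:
  assumes "finite S" "a \<notin> S" "B \<subseteq> S"
  shows "msign (insert a B) (S - B) * (-1) ^ card {s\<in>insert a B. s < a} =
    (-1) ^ card {s\<in>S. s < a} * msign B (S - B)"
proof -
  have fin: "finite B" "finite (S - B)" using assms finite_subset by auto
  have "card {s\<in>S. s < a} = card ({s\<in>S - B. s < a} \<union> {s\<in>B. s < a})"
    using assms(3) by (intro arg_cong[where f = card]) auto
  also have "\<dots> = card {s\<in>S - B. s < a} + card {s\<in>B. s < a}"
    using fin by (intro card_Un_disjoint) auto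
  finally have "card {s\<in>S. s < a} = card {s\<in>S - B. s < a} + card {s\<in>B. s < a}" .
  moreover have "{s\<in>insert a B. s < a} = {s\<in>B. s < a}" by auto
  moreover have "a \<notin> B" using assms(2,3) by auto
  ultimately show ?thesis
    using fin by (simp add: msign_insert power_add mult_ac)
qed

lemma emul_evar_assoc: "emul (emul (evar a) f) g = emul (evar a) (emul f g)"
proof
  fix S
  consider "infinite S" | "finite S" "a \<notin> S" | "finite S" "a \<in> S" by blast
  then show "emul (emul (evar a) f) g S = emul (evar a) (emul f g) S"
  proof cases
    case 1
    then show ?thesis by (simp add: emul_eq_0_if_infinite)
  next
    case 2
    then have "emul (emul (evar a) f) g S = 0"
      unfolding emul_def[of "emul (evar a) f"]
      by (intro sum.neutral) (auto simp: emul_evar finite_subset)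
    with 2 show ?thesis by (simp add: emul_evar)
  next
    case 3
    define S' where "S' = S - {a}"
    have S: "S = insert a S'" and S': "a \<notin> S'" "finite S'"
      using 3 by (auto simp: S'_def)
    let ?F = "\<lambda>A. msign A (S - A) * emul (evar a) f A * g (S - A)"
    have "emul (emul (evar a) f) g S = sum ?F (Pow S') + sum ?F (insert a ` Pow S')"
      unfolding emul_def[of "emul (evar a) f"] S Pow_insert
      by (rule sum.union_disjoint) (use S' in auto)
    also have "sum ?F (Pow S') = 0"
      using S' by (intro sum.neutral) (auto simp: emul_evar finite_subset)
    also have "sum ?F (insert a ` Pow S') = sum (\<lambda>B. ?F (insert a B)) (Pow S')"
      using S' by (subst sum.reindex) (auto simp: inj_on_def)
    also have "\<dots> = (\<Sum>B\<in>Pow S'. (-1) ^ card {s\<in>S'. s < a} * (msign B (S' - B) * f B * g (S' - B)))"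
    proof (rule sum.cong[OF refl])
      fix B assume B: "B \<in> Pow S'"
      with S' have "a \<notin> B" "finite (insert a B)" by (auto intro: finite_subset)
      moreover have "S - insert a B = S' - B" by (auto simp: S'_def)
      ultimately show "?F (insert a B) = (-1) ^ card {s\<in>S'. s < a} * (msign B (S' - B) * f B * g (S' - B))"
        using msign_insert_mult_sign[of S' a B] S' B by (simp add: emul_evar mult_ac)
    qed
    also have "{s\<in>S'. s < a} = {s\<in>S. s < a}" by (auto simp: S)
    also have "(\<Sum>B\<in>Pow S'. (-1) ^ card {s\<in>S. s < a} * (msign B (S' - B) * f B * g (S' - B))) =
        emul (evar a) (emul f g) S"
      using 3 by (simp add: emul_evar emul_def[of f g] sum_distrib_left S'_def)
    finally show ?thesis by simp
  qed
qed

lemma ederiv_emul_evar: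
  assumes f: "\<And>S. infinite S \<Longrightarrow> f S = 0"
  shows "ederiv a (emul (evar b) f) T = (if a = b then f T else 0) - emul (evar b) (ederiv a f) T"
proof (cases "finite T")
  case False
  then show ?thesis by (simp add: ederiv_def emul_eq_0_if_infinite f)
next
  case fin: True
  consider "a = b" | "a \<noteq> b" "a \<in> T \<or> b \<notin> T" | "a \<noteq> b" "a \<notin> T" "b \<in> T" by blast
  then show ?thesis
  proof cases
    case 1
    have "{s\<in>T - {a}. s < a} = {s\<in>T. s < a}" "{s\<in>insert a T. s < a} = {s\<in>T. s < a}" by auto
    with 1 fin show ?thesis by (simp add: ederiv_def emul_evar insert_absorb)
  next
    case 2
    with fin show ?thesis by (auto simp: ederiv_def emul_evar)
  next
    case 3
    let ?N = "\<lambda>X c. card {s\<in>X. s < c}"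
    have "?N (insert a T) b = ?N T b + (if a < b then 1 else 0)"
      using 3 fin by (intro card_less_insert)
    moreover have "?N T a = ?N (T - {b}) a + (if b < a then 1 else 0)"
      using card_less_insert[of "T - {b}" b a] 3 fin by (simp add: insert_absorb)
    \<comment> \<open>exactly one of \<open>a < b\<close>, \<open>b < a\<close> holds, so the two signs differ\<close>
    ultimately have "(-1::rat) ^ ?N T a * (-1) ^ ?N (insert a T) b = - ((-1) ^ ?N T b * (-1) ^ ?N (T - {b}) a)"
      using 3 by (auto simp: power_add dest: neqE)
    moreover have "insert a T - {b} = insert a (T - {b})" using 3 by auto
    ultimately show ?thesis using 3 fin by (simp add: ederiv_def emul_evar flip: mult.assoc)
  qed
qed

lemma ederiv_esmult: "ederiv a (esmult c f) = esmult c (ederiv a f)"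
  by (auto simp: ederiv_def esmult_def)

lemma ederiv_esum: "ederiv a (esum F A) = esum (\<lambda>x. ederiv a (F x)) A"
  by (auto simp: ederiv_def esum_def sum_distrib_left)

lemma ederiv_ederiv: "ederiv a (ederiv a f) = (\<lambda>_. 0)"
  by (simp add: ederiv_def fun_eq_iff)

lemma funpow_ederiv_zero: "(ederiv a ^^ m) (\<lambda>_. 0) = (\<lambda>_. 0)"
proof -
  have "ederiv a (\<lambda>_. 0) = (\<lambda>_. 0)" by (simp add: ederiv_def fun_eq_iff)
  then show ?thesis by (induction m) simp_all
qed

lemma funpow_ederiv_eq_0:
  assumes "2 \<le> m"
  shows "(ederiv a ^^ m) f = (\<lambda>_. 0)"
proof -
  obtain m' where m: "m = m' + 2" using assms by (metis add.commute le_add_diff_inverse)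
  have "(ederiv a ^^ m) f = (ederiv a ^^ m') ((ederiv a ^^ 2) f)"
    unfolding m funpow_add by simp
  also have "(ederiv a ^^ 2) f = ederiv a (ederiv a f)"
    by (simp add: numeral_2_eq_2)
  finally show ?thesis by (simp add: ederiv_ederiv funpow_ederiv_zero)
qed

lemma esmult_esmult: "esmult c (esmult d f) = esmult (c * d) f"
  by (simp add: esmult_def mult.assoc)

lemma esum_cong: "(\<And>x. x \<in> A \<Longrightarrow> F x = G x) \<Longrightarrow> esum F A = esum G A"
  by (simp add: esum_def)

lemma esum_eq_ezero: "(\<And>x. x \<in> A \<Longrightarrow> F x = ezero) \<Longrightarrow> esum F A = ezero"
  by (simp add: esum_def ezero_def)

lemma esum_swap: "esum (\<lambda>i. esum (F i) B) A = esum (\<lambda>j. esum (\<lambda>i. F i j) A) B"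
  by (simp add: esum_def fun_eq_iff sum.swap[of _ A])

lemma esum_Un_disjoint:
  "finite A \<Longrightarrow> finite B \<Longrightarrow> A \<inter> B = {} \<Longrightarrow>
    esum F (A \<union> B) = eadd (esum F A) (esum F B)"
  by (simp add: esum_def eadd_def sum.union_disjoint)

section \<open>Monomials and their derivatives\<close>

definition emonom :: "gen list \<Rightarrow> ext" where
  "emonom u = eprod (map evar u)"

lemma emonom_Nil: "emonom [] = eone"
  by (simp add: emonom_def eprod_def)

lemma emonom_Cons: "emonom (a # u) = emul (evar a) (emonom u)"
  by (simp add: emonom_def eprod_def)

lemma emonom_eq_0_if_infinite: "infinite S \<Longrightarrow> emonom u S = 0"
  by (cases u) (auto simp: emonom_Nil emonom_Cons eone_def emul_eq_0_if_infinite)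

lemma emonom_neq_0_imp_eq_set: "emonom u S \<noteq> 0 \<Longrightarrow> S = set u"
proof (induction u arbitrary: S)
  case Nil
  then show ?case by (simp add: emonom_Nil eone_def split: if_splits)
next
  case (Cons a u)
  then have "finite S" using emonom_eq_0_if_infinite by blast
  with Cons.prems have "a \<in> S" "emonom u (S - {a}) \<noteq> 0"
    by (auto simp: emonom_Cons emul_evar split: if_splits)
  with Cons.IH show ?case by auto
qed

lemma emul_eprod_emonom: "emul (eprod (map evar u)) (emonom v) = emonom (u @ v)"
  by (induction u) (simp_all add: eprod_def eone_emul emonom_eq_0_if_infinite emul_evar_assoc emonom_Cons)

lemma gen_simps [simp]:
  "th i = th j \<longleftrightarrow> i = j" "xi i = xi j \<longleftrightarrow> i = j" "rh i = rh j \<longleftrightarrow> i = j"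
  "th i \<noteq> xi j" "th i \<noteq> rh j" "xi i \<noteq> th j" "xi i \<noteq> rh j" "rh i \<noteq> th j" "rh i \<noteq> xi j"
  "snd (th i) = i" "snd (xi i) = i" "snd (rh i) = i"
  by (auto simp: th_def xi_def rh_def)

fun deriv_sign :: "gen \<Rightarrow> gen list \<Rightarrow> rat" where
  "deriv_sign a [] = 0"
| "deriv_sign a (b # u) = (if a = b then 1 else - deriv_sign a u)"

lemma deriv_sign_notin: "a \<notin> set u \<Longrightarrow> deriv_sign a u = 0"
  by (induction u) auto

lemma deriv_sign_map: "inj f \<Longrightarrow> deriv_sign (f a) (map f u) = deriv_sign a u"
  by (induction u) (auto simp: inj_eq)

lemma remove1_map: "inj f \<Longrightarrow> remove1 (f a) (map f u) = map f (remove1 a u)"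
  by (induction u) (auto simp: inj_eq)

lemma ederiv_emonom:
  "distinct u \<Longrightarrow> ederiv a (emonom u) = esmult (deriv_sign a u) (emonom (remove1 a u))"
proof (induction u)
  case Nil
  show ?case by (auto simp: emonom_Nil ederiv_def eone_def esmult_def)
next
  case (Cons b u)
  show ?case
  proof
    fix T
    have "ederiv a (emonom (b # u)) T =
        (if a = b then emonom u T else 0) - emul (evar b) (ederiv a (emonom u)) T"
      unfolding emonom_Cons by (rule ederiv_emul_evar) (rule emonom_eq_0_if_infinite)
    also have "\<dots> = esmult (deriv_sign a (b # u)) (emonom (remove1 a (b # u))) T"
      using Cons
      by (auto simp: emonom_Cons emul_def esmult_def deriv_sign_notin sum_distrib_left sum_negf mult_ac)
    finally show "ederiv a (emonom (b # u)) T = esmult (deriv_sign a (b # u)) (emonom (remove1 a (b # u))) T" .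
  qed
qed

definition escaled :: "rat \<times> gen list \<Rightarrow> ext" where
  "escaled w = esmult (fst w) (emonom (snd w))"

definition wderiv :: "gen \<Rightarrow> rat \<times> gen list \<Rightarrow> rat \<times> gen list" where
  "wderiv a w = (fst w * deriv_sign a (snd w), remove1 a (snd w))"

lemma distinct_funpow_wderiv: "distinct (snd w) \<Longrightarrow> distinct (snd ((wderiv a ^^ h) w))"
  by (induction h) (simp_all add: wderiv_def)

lemma ederiv_escaled: "distinct (snd w) \<Longrightarrow> ederiv a (escaled w) = escaled (wderiv a w)"
  by (simp add: escaled_def wderiv_def ederiv_esmult ederiv_emonom esmult_esmult)

lemma funpow_ederiv_escaled:
  "distinct (snd w) \<Longrightarrow> (ederiv a ^^ h) (escaled w) = escaled ((wderiv a ^^ h) w)"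
  by (induction h) (simp_all add: ederiv_escaled distinct_funpow_wderiv)

lemma funpow_wderiv_map:
  "inj f \<Longrightarrow> (wderiv (f a) ^^ h) (apsnd (map f) w) = apsnd (map f) ((wderiv a ^^ h) w)"
  by (induction h) (simp_all add: wderiv_def deriv_sign_map remove1_map)

section \<open>Polarized derivatives of alternants\<close>

definition polar_deriv :: "nat \<Rightarrow> nat \<Rightarrow> nat \<Rightarrow> nat \<Rightarrow> ext \<Rightarrow> ext" where
  "polar_deriv h k l i f = (ederiv (th i) ^^ h) ((ederiv (xi i) ^^ k) ((ederiv (rh i) ^^ l) f))"

definition polar_wderiv :: "nat \<Rightarrow> nat \<Rightarrow> nat \<Rightarrow> nat \<Rightarrow> rat \<times> gen list \<Rightarrow> rat \<times> gen list" where
  "polar_wderiv h k l i w = (wderiv (th i) ^^ h) ((wderiv (xi i) ^^ k) ((wderiv (rh i) ^^ l) w))"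

lemma polar_deriv_escaled:
  "distinct (snd w) \<Longrightarrow> polar_deriv h k l i (escaled w) = escaled (polar_wderiv h k l i w)"
  by (simp add: polar_deriv_def polar_wderiv_def funpow_ederiv_escaled distinct_funpow_wderiv)

lemma polar_deriv_linear:
  "polar_deriv h k l i (esum F A) = esum (\<lambda>x. polar_deriv h k l i (F x)) A"
  "polar_deriv h k l i (esmult c f) = esmult c (polar_deriv h k l i f)"
proof -
  have "(ederiv a ^^ m) (esum F A) = esum (\<lambda>x. (ederiv a ^^ m) (F x)) A"
    "(ederiv a ^^ m) (esmult c f) = esmult c ((ederiv a ^^ m) f)"
    for a m and F :: "'a \<Rightarrow> ext" and f
    by (induction m) (simp_all add: ederiv_esum ederiv_esmult)
  then show "polar_deriv h k l i (esum F A) = esum (\<lambda>x. polar_deriv h k l i (F x)) A"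
    "polar_deriv h k l i (esmult c f) = esmult c (polar_deriv h k l i f)"
    by (simp_all add: polar_deriv_def)
qed

lemma triag_harmI:
  assumes "in_alg n f"
    and "\<And>h k l. h \<le> 1 \<Longrightarrow> k \<le> 1 \<Longrightarrow> l \<le> 1 \<Longrightarrow> 0 < h + k + l \<Longrightarrow>
      esum (\<lambda>i. polar_deriv h k l i f) {1..n} = ezero"
  shows "f \<in> triag_harm n"
  unfolding triag_harm_def
proof (intro CollectI conjI allI impI assms(1))
  fix h k l :: nat
  assume "0 < h + k + l"
  then show "esum (\<lambda>i. (ederiv (th i) ^^ h) ((ederiv (xi i) ^^ k) ((ederiv (rh i) ^^ l) f))) {1..n} = ezero"
    using assms(2)[of h k l]
    by (cases "h \<le> 1 \<and> k \<le> 1 \<and> l \<le> 1")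
      (auto simp: polar_deriv_def funpow_ederiv_eq_0 funpow_ederiv_zero esum_def ezero_def not_le)
qed

definition perm_gen :: "(nat \<Rightarrow> nat) \<Rightarrow> gen \<Rightarrow> gen" where
  "perm_gen \<sigma> a = (fst a, \<sigma> (snd a))"

lemma perm_gen_simps [simp]:
  "perm_gen \<sigma> (th i) = th (\<sigma> i)" "perm_gen \<sigma> (xi i) = xi (\<sigma> i)" "perm_gen \<sigma> (rh i) = rh (\<sigma> i)"
  by (simp_all add: perm_gen_def th_def xi_def rh_def)

lemma inj_perm_gen: "inj \<sigma> \<Longrightarrow> inj (perm_gen \<sigma>)"
  by (auto simp: inj_def perm_gen_def prod_eq_iff)

lemma perm_gen_comp: "perm_gen (\<sigma> \<circ> \<tau>) = perm_gen \<sigma> \<circ> perm_gen \<tau>"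
  by (auto simp: perm_gen_def)

lemma polar_deriv_perm_escaled:
  assumes "inj \<sigma>" "distinct (snd w)"
  shows "polar_deriv h k l (\<sigma> j) (escaled (apsnd (map (perm_gen \<sigma>)) w)) =
    escaled (apsnd (map (perm_gen \<sigma>)) (polar_wderiv h k l j w))"
proof -
  have "polar_wderiv h k l (\<sigma> j) (apsnd (map (perm_gen \<sigma>)) w) =
      apsnd (map (perm_gen \<sigma>)) (polar_wderiv h k l j w)"
    using funpow_wderiv_map[OF inj_perm_gen[OF assms(1)]]
    by (simp add: polar_wderiv_def flip: perm_gen_simps)
  with assms show ?thesis
    by (simp add: polar_deriv_escaled distinct_map inj_on_subset[OF inj_perm_gen])
qed

definition alternant :: "nat \<Rightarrow> rat \<times> gen list \<Rightarrow> ext" where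
  "alternant n w = esum (\<lambda>\<sigma>. esmult (of_int (sign \<sigma>)) (escaled (apsnd (map (perm_gen \<sigma>)) w)))
     {\<sigma>. \<sigma> permutes {1..n}}"

lemma esum_polar_deriv_alternant:
  assumes "distinct (snd w)"
  shows "esum (\<lambda>i. polar_deriv h k l i (alternant n w)) {1..n} =
    esum (\<lambda>j. alternant n (polar_wderiv h k l j w)) {1..n}"
proof -
  let ?G = "{\<sigma>. \<sigma> permutes {1..n}}"
  let ?t = "\<lambda>\<sigma> w. esmult (of_int (sign \<sigma>)) (escaled (apsnd (map (perm_gen \<sigma>)) w))"
  have per_perm: "esum (\<lambda>i. polar_deriv h k l i (?t \<sigma> w)) {1..n} =
      esum (\<lambda>j. ?t \<sigma> (polar_wderiv h k l j w)) {1..n}" if "\<sigma> \<in> ?G" for \<sigma>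
  proof -
    have \<sigma>: "\<sigma> permutes {1..n}" "inj \<sigma>" using that permutes_inj by auto
    have "esum (\<lambda>i. polar_deriv h k l i (?t \<sigma> w)) {1..n} =
        esum (\<lambda>j. polar_deriv h k l (\<sigma> j) (?t \<sigma> w)) {1..n}"
      unfolding esum_def by (rule ext, rule sum.reindex_bij_betw[OF permutes_imp_bij[OF \<sigma>(1)], symmetric])
    then show ?thesis
      by (simp add: polar_deriv_linear polar_deriv_perm_escaled[OF \<sigma>(2) assms])
  qed
  have "esum (\<lambda>i. polar_deriv h k l i (alternant n w)) {1..n} =
      esum (\<lambda>i. esum (\<lambda>\<sigma>. polar_deriv h k l i (?t \<sigma> w)) ?G) {1..n}"
    by (simp add: alternant_def polar_deriv_linear)
  also have "\<dots> = esum (\<lambda>\<sigma>. esum (\<lambda>i. polar_deriv h k l i (?t \<sigma> w)) {1..n}) ?G"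
    by (rule esum_swap)
  also have "\<dots> = esum (\<lambda>\<sigma>. esum (\<lambda>j. ?t \<sigma> (polar_wderiv h k l j w)) {1..n}) ?G"
    by (rule esum_cong) (rule per_perm)
  also have "\<dots> = esum (\<lambda>j. alternant n (polar_wderiv h k l j w)) {1..n}"
    unfolding alternant_def by (rule esum_swap)
  finally show ?thesis .
qed

lemma alternant_transpose:
  assumes "x \<in> {1..n}" "y \<in> {1..n}" "x \<noteq> y"
  shows "alternant n (apsnd (map (perm_gen (transpose x y))) w) = esmult (-1) (alternant n w)"
proof
  fix S
  let ?G = "{\<sigma>. \<sigma> permutes {1..n}}" and ?\<tau> = "transpose x y"
  let ?t = "\<lambda>\<sigma> w. of_int (sign \<sigma>) * escaled (apsnd (map (perm_gen \<sigma>)) w) S"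
  have \<tau>: "?\<tau> permutes {1..n}" using assms by (intro permutes_swap_id)
  have compose_\<tau>: "?t (\<sigma> \<circ> ?\<tau>) w = - ?t \<sigma> (apsnd (map (perm_gen ?\<tau>)) w)" if "\<sigma> \<in> ?G" for \<sigma>
  proof -
    have "sign (\<sigma> \<circ> ?\<tau>) = - sign \<sigma>"
      using that \<tau> assms(3)
      by (simp add: sign_compose permutes_imp_permutation[OF finite_atLeastAtMost] sign_swap_id)
    then show ?thesis by (simp add: perm_gen_comp apsnd_def map_prod_def split_beta)
  qed
  have "alternant n w S = (\<Sum>\<sigma>\<in>?G. ?t \<sigma> w)"
    by (simp add: alternant_def esum_def esmult_def)
  also have "\<dots> = (\<Sum>\<sigma>\<in>?G. ?t (\<sigma> \<circ> ?\<tau>) w)"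
    by (rule sum_permutations_compose_right[OF \<tau>])
  also have "\<dots> = - (\<Sum>\<sigma>\<in>?G. ?t \<sigma> (apsnd (map (perm_gen ?\<tau>)) w))"
    by (simp add: compose_\<tau> sum_negf)
  finally show "alternant n (apsnd (map (perm_gen ?\<tau>)) w) S = esmult (-1) (alternant n w) S"
    by (simp add: alternant_def esum_def esmult_def)
qed

lemma alternant_eq_ezero_if_indices_missing:
  assumes "x \<in> {1..n}" "y \<in> {1..n}" "x \<noteq> y" "x \<notin> snd ` set (snd w)" "y \<notin> snd ` set (snd w)"
  shows "alternant n w = ezero"
proof -
  have "perm_gen (transpose x y) a = a" if "a \<in> set (snd w)" for a
  proof -
    have "snd a \<noteq> x" "snd a \<noteq> y" using imageI[OF that, of snd] assms(4,5) by auto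
    then show ?thesis by (simp add: perm_gen_def)
  qed
  then have "apsnd (map (perm_gen (transpose x y))) w = w"
    by (simp add: apsnd_def map_prod_def split_beta map_idI)
  with alternant_transpose[OF assms(1-3), of w] show ?thesis
    by (auto simp: esmult_def ezero_def fun_eq_iff)
qed

lemma alternant_zero_coeff: "alternant n (0, u) = ezero"
  by (simp add: alternant_def esum_def esmult_def escaled_def ezero_def)

lemma alternant_polar_wderiv_eq_ezero:
  assumes hkl: "h \<le> 1" "k \<le> 1" "l \<le> 1" "0 < h + k + l"
    and u: "distinct u" "\<forall>a\<in>set u. snd a < n" "\<forall>a\<in>set u. snd a = j \<longrightarrow> a = th j"
    and j: "j \<in> {1..n}"
  shows "alternant n (polar_wderiv h k l j (1, u)) = ezero"
proof -
  \<comment> \<open>only \<open>\<partial>\<theta>\<^sub>j\<close> can act, and removing \<open>\<theta>\<^sub>j\<close> leaves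
    both \<open>j\<close> and \<open>n\<close> absent from the word\<close>
  have "xi j \<notin> set u" "rh j \<notin> set u"
    using u(3) by auto
  moreover have "h = 0 \<or> h = 1" "k = 0 \<or> k = 1" "l = 0 \<or> l = 1" using hkl by auto
  ultimately have "polar_wderiv h k l j (1, u) = (deriv_sign (th j) u, remove1 (th j) u) \<or>
      fst (polar_wderiv h k l j (1, u)) = 0"
    using hkl(4) by (elim disjE) (simp_all add: polar_wderiv_def wderiv_def deriv_sign_notin)
  moreover have "alternant n (deriv_sign (th j) u, remove1 (th j) u) = ezero"
  proof (cases "th j \<in> set u")
    case True
    then have "snd (th j) < n" using u(2) by blast
    then have "j < n" by simp
    moreover have "snd a \<noteq> j" "snd a \<noteq> n" if "a \<in> set (remove1 (th j) u)" for a
      using that u by auto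
    ultimately show ?thesis
      using j by (intro alternant_eq_ezero_if_indices_missing[of j n n]) auto
  qed (simp add: deriv_sign_notin alternant_zero_coeff)
  ultimately show ?thesis by (metis prod.collapse alternant_zero_coeff)
qed

lemma mem_gens: "a \<in> gens n \<longleftrightarrow> fst a \<le> 2 \<and> snd a \<in> {1..n}"
  by (cases a) (auto simp: gens_def th_def xi_def rh_def le_Suc_eq numeral_2_eq_2)

lemma perm_gen_in_gens:
  assumes "\<sigma> permutes {1..n}" "a \<in> gens n"
  shows "perm_gen \<sigma> a \<in> gens n"
proof -
  have "\<sigma> (snd a) \<in> {1..n}"
    using assms permutes_in_image[OF assms(1)] by (simp add: mem_gens)
  with assms(2) show ?thesis by (simp add: mem_gens perm_gen_def)
qed

lemma in_alg_esum: "(\<And>x. x \<in> A \<Longrightarrow> in_alg n (F x)) \<Longrightarrow> in_alg n (esum F A)"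
  unfolding in_alg_def esum_def by (metis (mono_tags, lifting) sum.neutral)

lemma in_alg_alternant:
  assumes "set (snd w) \<subseteq> gens n"
  shows "in_alg n (alternant n w)"
  unfolding alternant_def
proof (rule in_alg_esum)
  fix \<sigma> assume "\<sigma> \<in> {\<sigma>. \<sigma> permutes {1..n}}"
  then have gens: "set (map (perm_gen \<sigma>) (snd w)) \<subseteq> gens n"
    using assms perm_gen_in_gens by auto
  show "in_alg n (esmult (of_int (sign \<sigma>)) (escaled (apsnd (map (perm_gen \<sigma>)) w)))"
    unfolding in_alg_def
  proof (intro allI impI)
    fix S
    assume "esmult (of_int (sign \<sigma>)) (escaled (apsnd (map (perm_gen \<sigma>)) w)) S \<noteq> 0"
    then have "emonom (map (perm_gen \<sigma>) (snd w)) S \<noteq> 0"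
      by (simp add: esmult_def escaled_def)
    then have "S = set (map (perm_gen \<sigma>) (snd w))"
      by (rule emonom_neq_0_imp_eq_set)
    with gens show "S \<subseteq> gens n" by simp
  qed
qed

section \<open>The seeds\<close>

lemma Delta1_eq_alternant: "Delta1 n = alternant n (1, map th [1..<n])"
  by (simp add: Delta1_def alternant_def escaled_def emonom_def esmult_def o_def)

lemma esum_polar_deriv_Delta1:
  assumes "h \<le> 1" "k \<le> 1" "l \<le> 1" "0 < h + k + l"
  shows "esum (\<lambda>i. polar_deriv h k l i (Delta1 n)) {1..n} = ezero"
proof -
  let ?u = "map th [1..<n]"
  have u: "distinct ?u" by (simp add: distinct_map inj_on_def)
  then have "esum (\<lambda>i. polar_deriv h k l i (Delta1 n)) {1..n} =
      esum (\<lambda>j. alternant n (polar_wderiv h k l j (1, ?u))) {1..n}"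
    unfolding Delta1_eq_alternant by (intro esum_polar_deriv_alternant) simp
  also have "\<dots> = ezero"
    using assms u by (intro esum_eq_ezero alternant_polar_wderiv_eq_ezero) auto
  finally show ?thesis .
qed

definition Delta2_words :: "nat \<Rightarrow> gen list set" where
  "Delta2_words n = {th 1 # xi 2 # rh 2 # map th [3..<n], th 2 # xi 1 # rh 2 # map th [3..<n],
     th 2 # xi 2 # rh 1 # map th [3..<n]}"

lemma esum_Delta2_words:
  "esum F (Delta2_words n) = eadd (eadd (F (th 1 # xi 2 # rh 2 # map th [3..<n]))
     (F (th 2 # xi 1 # rh 2 # map th [3..<n]))) (F (th 2 # xi 2 # rh 1 # map th [3..<n]))"
  by (simp add: Delta2_words_def esum_def eadd_def fun_eq_iff add.assoc)

lemma Delta2_eq_esum_alternant: "Delta2 n = esum (\<lambda>u. alternant n (1, u)) (Delta2_words n)"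
proof -
  let ?\<Theta> = "map th [3..<n]"
  let ?M = "\<lambda>\<sigma> u. emonom (map (perm_gen \<sigma>) (u @ ?\<Theta>))"
  have prefix: "eprod [evar (th (\<sigma> i)), evar (xi (\<sigma> j)), evar (rh (\<sigma> m))] =
      eprod (map evar (map (perm_gen \<sigma>) [th i, xi j, rh m]))" for \<sigma> i j m
    by simp
  have tail: "eprod (map (\<lambda>i. evar (th (\<sigma> i))) [3..<n]) = emonom (map (perm_gen \<sigma>) ?\<Theta>)" for \<sigma>
    by (simp add: emonom_def o_def)
  have "Delta2 n = esum (\<lambda>\<sigma>. esmult (of_int (sign \<sigma>))
      (eadd (eadd (?M \<sigma> [th 1, xi 2, rh 2]) (?M \<sigma> [th 2, xi 1, rh 2])) (?M \<sigma> [th 2, xi 2, rh 1])))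
      {\<sigma>. \<sigma> permutes {1..n}}"
    unfolding Delta2_def prefix tail emul_eadd_left emul_eprod_emonom map_append ..
  then show ?thesis
    unfolding esum_Delta2_words
    by (simp add: alternant_def esum_def esmult_def eadd_def escaled_def fun_eq_iff
        sum.distrib ring_distribs)
qed

lemma alternant_tail_eq_ezero:
  assumes "3 \<le> n" "snd ` set v \<subseteq> {i}"
  shows "alternant n (c, v @ map th [3..<n]) = ezero"
proof -
  obtain x y :: nat where "x \<in> {1, 2, n}" "y \<in> {1, 2, n}" "x \<noteq> y" "x \<noteq> i" "y \<noteq> i"
  proof (cases "i \<in> {1, 2}")
    case True
    then show ?thesis using assms(1) by (intro that[of "3 - i" n]) auto
  qed (intro that[of 1 2], auto)
  with assms show ?thesis
    by (intro alternant_eq_ezero_if_indices_missing[of x n y]) auto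
qed

lemma alternant_transpose_12:
  assumes "3 \<le> n" "snd p = 1" "snd q = 2"
  shows "alternant n (c, p # q # map th [3..<n]) =
    esmult (-1) (alternant n (c, perm_gen (transpose 1 2) p # perm_gen (transpose 1 2) q # map th [3..<n]))"
proof -
  let ?\<tau> = "transpose (1::nat) 2"
  let ?w = "(c, perm_gen ?\<tau> p # perm_gen ?\<tau> q # map th [3..<n])"
  have "apsnd (map (perm_gen ?\<tau>)) ?w = (c, p # q # map th [3..<n])"
    using assms(2,3) by (simp add: perm_gen_def th_def prod_eq_iff cong: map_cong)
  moreover have "alternant n (apsnd (map (perm_gen ?\<tau>)) ?w) = esmult (-1) (alternant n ?w)"
    using assms by (intro alternant_transpose) auto
  ultimately show ?thesis by metis
qed

lemma Delta2_low_index_terms_cancel: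
  assumes "3 \<le> n" "h \<le> 1" "k \<le> 1" "l \<le> 1" "0 < h + k + l"
  shows "esum (\<lambda>j. esum (\<lambda>u. alternant n (polar_wderiv h k l j (1, u))) (Delta2_words n)) {1, 2} = ezero"
proof -
  let ?\<Theta> = "map th [3..<n]"
  \<comment> \<open>each derived word either carries a single index below 3 (\<open>one\<close>, \<open>two\<close>),
    or is cancelled by its image under \<open>(1 2)\<close> (\<open>swap\<close>)\<close>
  have one: "alternant n (c, p # ?\<Theta>) = ezero" for c p
    using alternant_tail_eq_ezero[OF assms(1), of "[p]" "snd p" c] by simp
  have two: "alternant n (c, p # q # ?\<Theta>) = ezero" if "snd p = snd q" for c p q
    using alternant_tail_eq_ezero[OF assms(1), of "[p, q]" "snd p" c] that by simp
  have swap: "alternant n (c, p # q # ?\<Theta>) =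
      esmult (-1) (alternant n (c, perm_gen (transpose 1 2) p # perm_gen (transpose 1 2) q # ?\<Theta>))"
    if "snd p = 1" "snd q = 2" for c p q
    using alternant_transpose_12[OF assms(1) that] .
  have tail: "deriv_sign a ?\<Theta> = 0" "remove1 a ?\<Theta> = ?\<Theta>" if "snd a < 3" for a
  proof -
    have "a \<notin> set ?\<Theta>" using that by auto
    then show "deriv_sign a ?\<Theta> = 0" "remove1 a ?\<Theta> = ?\<Theta>"
      by (simp_all add: deriv_sign_notin remove1_idem)
  qed
  have "h = 0 \<or> h = 1" "k = 0 \<or> k = 1" "l = 0 \<or> l = 1" using assms by auto
  then show ?thesis
    using assms(5) unfolding esum_Delta2_words
    by (elim disjE)
      (simp_all add: polar_wderiv_def wderiv_def one two swap tail alternant_zero_coeff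
        esum_def eadd_def esmult_def ezero_def fun_eq_iff)
qed

lemma esum_polar_deriv_Delta2:
  assumes "3 \<le> n" "h \<le> 1" "k \<le> 1" "l \<le> 1" "0 < h + k + l"
  shows "esum (\<lambda>i. polar_deriv h k l i (Delta2 n)) {1..n} = ezero"
proof -
  let ?T = "\<lambda>j. esum (\<lambda>u. alternant n (polar_wderiv h k l j (1, u))) (Delta2_words n)"
  have words: "distinct u" "\<forall>a\<in>set u. snd a < n" if "u \<in> Delta2_words n" for u
    using that assms(1) by (auto simp: Delta2_words_def distinct_map inj_on_def th_def xi_def rh_def)
  have words_high: "\<forall>a\<in>set u. snd a = j \<longrightarrow> a = th j" if "u \<in> Delta2_words n" "3 \<le> j" for u j
    using that by (auto simp: Delta2_words_def th_def xi_def rh_def)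
  have "esum (\<lambda>i. polar_deriv h k l i (Delta2 n)) {1..n} =
      esum (\<lambda>i. esum (\<lambda>u. polar_deriv h k l i (alternant n (1, u))) (Delta2_words n)) {1..n}"
    by (simp add: Delta2_eq_esum_alternant polar_deriv_linear)
  also have "\<dots> = esum ?T {1..n}"
    using words(1) by (simp add: esum_swap[of _ _ "{1..n}"] esum_polar_deriv_alternant cong: esum_cong)
  also have "\<dots> = eadd (esum ?T {1, 2}) (esum ?T {3..n})"
    using assms(1) by (subst esum_Un_disjoint[symmetric]) (auto intro: arg_cong[where f = "esum ?T"])
  also have "esum ?T {3..n} = ezero"
    using assms words words_high by (intro esum_eq_ezero alternant_polar_wderiv_eq_ezero) auto
  finally show ?thesis
    using Delta2_low_index_terms_cancel[OF assms] by (simp add: eadd_def ezero_def)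
qed

lemma Delta1_mem_triag_harm: "Delta1 n \<in> triag_harm n"
proof (rule triag_harmI)
  show "in_alg n (Delta1 n)"
    unfolding Delta1_eq_alternant by (rule in_alg_alternant) (auto simp: mem_gens th_def)
qed (rule esum_polar_deriv_Delta1)

lemma Delta2_mem_triag_harm:
  assumes "3 \<le> n"
  shows "Delta2 n \<in> triag_harm n"
proof (rule triag_harmI)
  show "in_alg n (Delta2 n)"
    unfolding Delta2_eq_esum_alternant using assms
    by (intro in_alg_esum in_alg_alternant) (auto simp: Delta2_words_def mem_gens th_def xi_def rh_def)
qed (rule esum_polar_deriv_Delta2[OF assms])

theorem proposition4p4:
  shows "(\<forall>n::nat. n \<ge> 1 \<longrightarrow> Delta1 n \<in> triag_harm n)
       \<and> (\<forall>n::nat. n \<ge> 3 \<longrightarrow> Delta2 n \<in> triag_harm n)"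
  using Delta1_mem_triag_harm Delta2_mem_triag_harm by blast

end
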